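(* Fix $-1<\xi_1<\xi_2<\xi_3<1$. As $(s,t)\to(0,0)$ with $s,t>0$, $$P(s,t)-P(0,0)=\frac{1}{2\sqrt{1-\xi_2}\sqrt{1+\xi_2}\sqrt{\xi_3-\xi_2}}\,t\ln\frac1t+o\!\left(t\ln\frac1t\right)+O(s).$$
   Context: Fix $-1<\xi_1<\xi_2<\xi_3<1$. For real $y$, $\sqrt y$ denotes the principal branch: $\sqrt y\ge0$ for $y\ge0$ and $\sqrt y=i\sqrt{|y|}$ for $y<0$. For small $s,t\ge 0$ let $$g_{s,t}(x)=\frac{\sqrt{x-\xi_1+s}\,\sqrt{x-\xi_2+t}}{\sqrt{x-1}\sqrt{x+1}\sqrt{x-\xi_1}\sqrt{x-\xi_2}\sqrt{x-\xi_3}},$$ and define $A(s,t)=-i\int_{-\infty}^{-1}g_{s,t}\,dx$, $B(s,t)=-i\int_{\xi_1-s}^{\xi_1}g_{s,t}\,dx$, $C(s,t)=-i\int_{\xi_2-t}^{\xi_2}g_{s,t}\,dx$, $P(s,t)=-\int_{\xi_2}^{\xi_3}g_{s,t}\,dx$, $Q(s,t)=-\int_{\xi_1}^{\xi_2-t}g_{s,t}\,dx$, and $1/J(s,t)=\int_1^{\infty}g_{s,t}\,dx$ (all these are real). Notation: $h=O(g)$ means $|h/g|$ is bounded near $(0,0)$, and $h=o(g)$ means $h/g\to0$ as $(s,t)\to(0,0)$. *)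

theory Defs
  imports "HOL-Analysis.Analysis" "HOL-Library.Landau_Symbols"
begin

text \<open>Principal square root of a real number, as a complex number:
  psqrt y = sqrt y for y \<ge> 0 and i * sqrt |y| for y < 0 (this is exactly csqrt on reals).\<close>
definition psqrt :: "real \<Rightarrow> complex" where
  "psqrt y = csqrt (complex_of_real y)"

definition gst :: "real \<Rightarrow> real \<Rightarrow> real \<Rightarrow> real \<Rightarrow> real \<Rightarrow> real \<Rightarrow> complex" where
  "gst \<xi>1 \<xi>2 \<xi>3 s t x =
     (psqrt (x - \<xi>1 + s) * psqrt (x - \<xi>2 + t)) /
     (psqrt (x - 1) * psqrt (x + 1) * psqrt (x - \<xi>1) * psqrt (x - \<xi>2) * psqrt (x - \<xi>3))"

definition Pst :: "real \<Rightarrow> real \<Rightarrow> real \<Rightarrow> real \<Rightarrow> real \<Rightarrow> complex" where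
  "Pst \<xi>1 \<xi>2 \<xi>3 s t = - integral {\<xi>2..\<xi>3} (gst \<xi>1 \<xi>2 \<xi>3 s t)"

end

theory Submission
  imports Defs "HOL-Real_Asymp.Real_Asymp"
begin

(* On (xi2, xi3) exactly the square roots of x - 1 and x - xi3 are imaginary, so there
   g_{s,t} = -k (1 + psi_s) (1 + phi_t) with k(x) = 1 / sqrt ((1 - x) (1 + x) (xi3 - x)),
   psi_s(x) = sqrt (x - xi1 + s) / sqrt (x - xi1) - 1 and
   phi_t(x) = sqrt (x - xi2 + t) / sqrt (x - xi2) - 1.
   Expanding,
     P(s,t) - P(0,0) = int k psi_s (1 + phi_t) + k(xi2) int phi_t + int (k - k(xi2)) phi_t.
   Since psi_s = O(s) uniformly, the first integral is O(s). The function phi_t has an elementary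
   antiderivative, and int phi_t = (t/2) ln (1/t) + O(t) yields the main term. In the last integral
   k(x) - k(xi2) = O(x - xi2) compensates phi_t <= t / (x - xi2), so it is O(t). All integrands are
   dominated by multiples of the arcsine weight 1 / sqrt ((x - xi2) (xi3 - x)), whose integral is pi. *)

lemma continuous_dominated_integrable:
  fixes f w :: "real \<Rightarrow> real"
  assumes "S \<in> sets lebesgue" "continuous_on S f" "(w has_integral I) S"
    and "\<And>x. x \<in> S \<Longrightarrow> \<bar>f x\<bar> \<le> M * w x"
  shows "f integrable_on S" "\<bar>integral S f\<bar> \<le> M * I"
proof -
  have Mw: "((\<lambda>x. M * w x) has_integral M * I) S"
    using has_integral_mult_right[OF assms(3)] by simp
  have Mw_int: "(\<lambda>x. M * w x) integrable_on S"
    using Mw by blast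
  show f: "f integrable_on S"
    using continuous_imp_measurable_on_sets_lebesgue[OF assms(2,1)] Mw_int assms(4,1)
    by (rule measurable_bounded_by_integrable_imp_integrable_real)
  have "norm (integral S f) \<le> integral S (\<lambda>x. M * w x)"
    by (rule integral_norm_bound_integral[OF f Mw_int]) (use assms(4) in simp)
  also have "\<dots> = M * I"
    using Mw by (rule integral_unique)
  finally show "\<bar>integral S f\<bar> \<le> M * I"
    by simp
qed

definition arcsine_weight :: "real \<Rightarrow> real \<Rightarrow> real \<Rightarrow> real" where
  "arcsine_weight b c x = 1 / sqrt ((x - b) * (c - x))"

lemma has_real_derivative_arcsine_weight:
  assumes "x \<in> {b<..<c}"
  shows "((\<lambda>x. arcsin ((2 * x - b - c) / (c - b))) has_real_derivative arcsine_weight b c x) (at x)"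
proof -
  define d where "d = c - b"
  define u where "u = (2 * x - b - c) / d"
  have d: "0 < d"
    using assms by (simp add: d_def)
  have u: "-1 < u" "u < 1"
    using assms by (auto simp: u_def d_def divide_simps)
  have "1 - u\<^sup>2 = (d\<^sup>2 - (2 * x - b - c)\<^sup>2) / d\<^sup>2"
    using d by (simp add: u_def power_divide field_simps)
  also have "\<dots> = (2 / d)\<^sup>2 * ((x - b) * (c - x))"
    by (simp add: d_def power_divide power2_eq_square algebra_simps)
  finally have "sqrt (1 - u\<^sup>2) = 2 / d * sqrt ((x - b) * (c - x))"
    using d by (simp add: real_sqrt_mult)
  moreover have "0 < sqrt ((x - b) * (c - x))"
    using assms by simp
  ultimately have "inverse (sqrt (1 - u\<^sup>2)) * (2 / d) = arcsine_weight b c x"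
    using d by (simp add: arcsine_weight_def field_simps)
  moreover have "((\<lambda>x. arcsin ((2 * x - b - c) / d))
      has_real_derivative inverse (sqrt (1 - u\<^sup>2)) * (2 / d)) (at x)"
    unfolding u_def using u[unfolded u_def] d
    by (intro DERIV_chain2[OF DERIV_arcsin]) (auto intro!: derivative_eq_intros simp: divide_simps)
  ultimately show ?thesis
    by (simp add: d_def)
qed

lemma has_integral_arcsine_weight:
  assumes "b < c"
  shows "(arcsine_weight b c has_integral pi) {b<..<c}"
proof -
  define A where "A x = arcsin ((2 * x - b - c) / (c - b))" for x
  have "(arcsine_weight b c has_integral (A c - A b)) {b..c}"
  proof (rule fundamental_theorem_of_calculus_interior)
    show "continuous_on {b..c} A"
      unfolding A_def using assms by (intro continuous_intros) (auto simp: divide_simps)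
    show "(A has_vector_derivative arcsine_weight b c x) (at x)" if "x \<in> {b<..<c}" for x
      using has_real_derivative_arcsine_weight[OF that]
      by (simp add: A_def[abs_def] has_real_derivative_iff_has_vector_derivative)
  qed (use assms in simp)
  moreover have "(b - c) / (c - b) = -1" "(2 * c - b - c) / (c - b) = 1"
    using assms by (simp_all add: divide_simps)
  then have "A c - A b = pi"
    by (simp add: A_def)
  ultimately show ?thesis
    by (simp add: has_integral_Icc_iff_Ioo)
qed

lemma inverse_sqrt_le_arcsine_weight:
  assumes "x \<in> {b<..<c}"
  shows "1 / sqrt (x - b) \<le> sqrt (c - b) * arcsine_weight b c x"
    and "1 / sqrt (c - x) \<le> sqrt (c - b) * arcsine_weight b c x"
proof -
  have W: "arcsine_weight b c x = 1 / (sqrt (x - b) * sqrt (c - x))" "0 \<le> arcsine_weight b c x"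
    using assms by (auto simp: arcsine_weight_def real_sqrt_mult)
  have "1 / sqrt (x - b) = sqrt (c - x) * arcsine_weight b c x"
    using assms by (simp add: W)
  also have "\<dots> \<le> sqrt (c - b) * arcsine_weight b c x"
    using assms W by (intro mult_right_mono) auto
  finally show "1 / sqrt (x - b) \<le> sqrt (c - b) * arcsine_weight b c x" .
  have "1 / sqrt (c - x) = sqrt (x - b) * arcsine_weight b c x"
    using assms by (simp add: W)
  also have "\<dots> \<le> sqrt (c - b) * arcsine_weight b c x"
    using assms W by (intro mult_right_mono) auto
  finally show "1 / sqrt (c - x) \<le> sqrt (c - b) * arcsine_weight b c x" .
qed

definition sqrt_shift_excess :: "real \<Rightarrow> real \<Rightarrow> real \<Rightarrow> real" where
  "sqrt_shift_excess b t x = sqrt (x - b + t) / sqrt (x - b) - 1"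

lemma sqrt_shift_excess_zero: "b < x \<Longrightarrow> sqrt_shift_excess b 0 x = 0"
  by (simp add: sqrt_shift_excess_def)

lemma sqrt_shift_excess_nonneg: "b < x \<Longrightarrow> 0 \<le> t \<Longrightarrow> 0 \<le> sqrt_shift_excess b t x"
  by (simp add: sqrt_shift_excess_def)

lemma sqrt_shift_excess_le:
  assumes "b < x" "0 \<le> t"
  shows "sqrt_shift_excess b t x \<le> t / (x - b)"
proof -
  define u where "u = x - b"
  have u: "0 < sqrt u" "sqrt u \<le> sqrt (u + t)" using assms by (auto simp: u_def)
  have "(sqrt (u + t) - sqrt u) * sqrt u \<le> (sqrt (u + t) - sqrt u) * (sqrt (u + t) + sqrt u)"
    using u by (intro mult_left_mono) auto
  also have "\<dots> = t" using assms by (simp add: u_def algebra_simps)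
  finally have "(sqrt (u + t) - sqrt u) * sqrt u / u \<le> t / u"
    using assms by (intro divide_right_mono) (auto simp: u_def)
  moreover have "sqrt_shift_excess b t x = (sqrt (u + t) - sqrt u) * sqrt u / u"
    using u by (simp add: sqrt_shift_excess_def u_def[symmetric] field_simps)
  ultimately show ?thesis
    by (simp add: u_def)
qed

lemma has_real_derivative_sqrt_shift_excess:
  assumes "b < x" "0 < t"
  shows "((\<lambda>x. sqrt (x - b) * sqrt (x - b + t) + t * ln (sqrt (x - b) + sqrt (x - b + t)) - (x - b))
    has_real_derivative sqrt_shift_excess b t x) (at x)"
proof -
  define A B where "A = sqrt (x - b)" and "B = sqrt (x - b + t)"
  have AB: "0 < A" "0 < B" "B\<^sup>2 = A\<^sup>2 + t"
    using assms by (auto simp: A_def B_def)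
  have "((\<lambda>x. sqrt (x - b) * sqrt (x - b + t) + t * ln (sqrt (x - b) + sqrt (x - b + t)) - (x - b))
      has_real_derivative
        inverse A * B / 2 + inverse B * A / 2 + (inverse A / 2 + inverse B / 2) * t / (A + B) - 1) (at x)"
    using assms AB by (auto intro!: derivative_eq_intros simp: A_def[symmetric] B_def[symmetric])
  moreover have "inverse A * B / 2 + inverse B * A / 2 + (inverse A / 2 + inverse B / 2) * t / (A + B) - 1
      = B / A - 1"
  proof -
    have "inverse A / 2 + inverse B / 2 = (A + B) / (2 * A * B)"
      using AB by (simp add: field_simps)
    moreover have "A + B \<noteq> 0"
      using AB by simp
    ultimately have "(inverse A / 2 + inverse B / 2) * t / (A + B) = t / (2 * A * B)"
      by simp
    moreover have "inverse A * B / 2 + inverse B * A / 2 + t / (2 * A * B)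
        = (B\<^sup>2 + A\<^sup>2 + t) / (2 * A * B)"
      using AB by (simp add: field_simps power2_eq_square)
    moreover have "(B\<^sup>2 + A\<^sup>2 + t) / (2 * A * B) = B / A"
    proof -
      have sq: "B\<^sup>2 + A\<^sup>2 + t = 2 * B\<^sup>2"
        using AB(3) by simp
      show ?thesis
        unfolding sq using AB(1,2) by (simp add: power2_eq_square)
    qed
    ultimately show ?thesis
      by simp
  qed
  ultimately show ?thesis
    by (simp only: sqrt_shift_excess_def A_def B_def)
qed

lemma has_integral_sqrt_shift_excess:
  assumes "0 < t" "b < c"
  shows "(sqrt_shift_excess b t has_integral t / 2 * ln (1 / t)
    + (sqrt (c - b) * sqrt (c - b + t) - (c - b) + t * ln (sqrt (c - b) + sqrt (c - b + t)))) {b<..<c}"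
proof -
  define H where
    "H x = sqrt (x - b) * sqrt (x - b + t) + t * ln (sqrt (x - b) + sqrt (x - b + t)) - (x - b)" for x
  have "(sqrt_shift_excess b t has_integral H c - H b) {b..c}"
  proof (rule fundamental_theorem_of_calculus_interior)
    have pos: "0 < sqrt (x - b) + sqrt (x - b + t)" if "b \<le> x" for x
      using that assms by (simp add: add_nonneg_pos)
    show "continuous_on {b..c} H"
      unfolding H_def by (intro continuous_intros) (use pos in fastforce)+
    show "(H has_vector_derivative sqrt_shift_excess b t x) (at x)" if "x \<in> {b<..<c}" for x
      using has_real_derivative_sqrt_shift_excess[of b x t] that assms
      by (simp add: H_def[abs_def] has_real_derivative_iff_has_vector_derivative)
  qed (use assms in simp)
  moreover have "H c - H b = t / 2 * ln (1 / t)
      + (sqrt (c - b) * sqrt (c - b + t) - (c - b) + t * ln (sqrt (c - b) + sqrt (c - b + t)))"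
    using assms by (simp add: H_def ln_sqrt ln_div)
  ultimately show ?thesis
    by (simp add: has_integral_Icc_iff_Ioo)
qed

lemma integral_sqrt_shift_excess_asymp:
  assumes "b < c"
  shows "(\<lambda>t. integral {b<..<c} (sqrt_shift_excess b t) - t / 2 * ln (1 / t)) \<in> O[at_right 0](\<lambda>t. t)"
proof -
  have "(\<lambda>t. sqrt (c - b) * sqrt (c - b + t) - (c - b) + t * ln (sqrt (c - b) + sqrt (c - b + t)))
      \<in> O[at_right 0](\<lambda>t. t)"
    using assms by (real_asymp simp: sqrt_def[symmetric] powr_half_sqrt)
  moreover have "\<forall>\<^sub>F t in at_right 0.
      integral {b<..<c} (sqrt_shift_excess b t) - t / 2 * ln (1 / t)
      = sqrt (c - b) * sqrt (c - b + t) - (c - b) + t * ln (sqrt (c - b) + sqrt (c - b + t))"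
    using eventually_at_right_less
    by eventually_elim
      (use assms in \<open>simp add: integral_unique[OF has_integral_sqrt_shift_excess]\<close>)
  ultimately show ?thesis
    by (simp add: landau_o.big.in_cong)
qed

lemma abs_inverse_sqrt_diff_le:
  assumes "0 < p" "0 < q"
  shows "\<bar>1 / sqrt p - 1 / sqrt q\<bar> \<le> \<bar>q - p\<bar> / (sqrt p * q)"
proof -
  have sum: "0 < sqrt p + sqrt q"
    using assms by (simp add: add_pos_pos)
  have "1 / sqrt p - 1 / sqrt q = (sqrt q - sqrt p) / (sqrt p * sqrt q)"
    using assms by (simp add: diff_frac_eq)
  also have "\<dots> = (sqrt q - sqrt p) * (sqrt p + sqrt q) / (sqrt p * (sqrt q * (sqrt p + sqrt q)))"
    using sum by (simp add: mult.assoc)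
  also have "(sqrt q - sqrt p) * (sqrt p + sqrt q) = q - p"
    using assms by (simp add: algebra_simps)
  finally have "1 / sqrt p - 1 / sqrt q = (q - p) / (sqrt p * (sqrt q * (sqrt p + sqrt q)))" .
  moreover have "sqrt p * q \<le> sqrt p * (sqrt q * (sqrt p + sqrt q))"
    using assms by (intro mult_left_mono) (auto simp: algebra_simps)
  ultimately show ?thesis
    using assms by (simp add: abs_div abs_mult divide_left_mono)
qed

lemma cubic_diff_le:
  fixes b c x :: real
  assumes "\<bar>b\<bar> \<le> 1" "\<bar>c\<bar> \<le> 1" "\<bar>x\<bar> \<le> 1"
  shows "\<bar>(1 - b) * (1 + b) * (c - b) - (1 - x) * (1 + x) * (c - x)\<bar> \<le> 6 * \<bar>x - b\<bar>"
proof -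
  have "(1 - b) * (1 + b) * (c - b) - (1 - x) * (1 + x) * (c - x)
      = (x - b) * (1 + c * (x + b) - x * x - x * b - b * b)"
    by (simp add: algebra_simps)
  moreover have "\<bar>1 + c * (x + b) - x * x - x * b - b * b\<bar> \<le> 6"
  proof -
    have "\<bar>c * (x + b)\<bar> \<le> 1 * 2"
      unfolding abs_mult using assms by (intro mult_mono) auto
    moreover have "\<bar>x * x\<bar> \<le> 1 * 1" "\<bar>x * b\<bar> \<le> 1 * 1" "\<bar>b * b\<bar> \<le> 1 * 1"
      unfolding abs_mult using assms by (intro mult_mono; simp)+
    ultimately show ?thesis
      by (simp only: abs_le_iff) linarith
  qed
  ultimately show ?thesis
    by (simp add: abs_mult mult.commute mult_left_mono)
qed

definition unperturbed_integrand :: "real \<Rightarrow> real \<Rightarrow> real" where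
  "unperturbed_integrand c x = 1 / (sqrt (1 - x) * sqrt (1 + x) * sqrt (c - x))"

lemma unperturbed_integrand_pos: "-1 < x \<Longrightarrow> x < c \<Longrightarrow> c < 1 \<Longrightarrow> 0 < unperturbed_integrand c x"
  by (simp add: unperturbed_integrand_def)

lemma unperturbed_integrand_le:
  assumes "-1 < b" "x \<in> {b<..<c}" "c < 1"
  shows "unperturbed_integrand c x \<le> 1 / (sqrt (1 - c) * sqrt (1 + b) * sqrt (c - x))"
proof -
  have "0 < sqrt (1 - c) * sqrt (1 + b) * sqrt (c - x)"
    using assms by auto
  moreover have "0 \<le> sqrt (1 - x) * sqrt (1 + x) * sqrt (c - x)"
    using assms by (intro mult_nonneg_nonneg) auto
  ultimately show ?thesis
    unfolding unperturbed_integrand_def using assms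
    by (intro divide_left_mono mult_mono) auto
qed

lemma unperturbed_integrand_diff_le:
  assumes "-1 < b" "b < c" "c < 1"
  obtains M where "0 \<le> M"
    "\<And>x. x \<in> {b<..<c} \<Longrightarrow>
      \<bar>unperturbed_integrand c x - unperturbed_integrand c b\<bar> \<le> M * (x - b) / sqrt (c - x)"
proof
  define p where "p x = (1 - x) * (1 + x) * (c - x)" for x
  have unperturbed_integrand_p: "unperturbed_integrand c x = 1 / sqrt (p x)" for x
    by (simp add: unperturbed_integrand_def p_def real_sqrt_mult)
  have "0 < p b"
    using assms by (simp add: p_def)
  then show "0 \<le> 6 / (p b * sqrt (1 - c) * sqrt (1 + b))"
    using assms by simp
  fix x assume x: "x \<in> {b<..<c}"
  have p: "0 < p x" "0 < p b"
    using assms x by (auto simp: p_def)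
  have "\<bar>unperturbed_integrand c x - unperturbed_integrand c b\<bar>
      \<le> \<bar>p b - p x\<bar> / (sqrt (p x) * p b)"
    unfolding unperturbed_integrand_p using abs_inverse_sqrt_diff_le[OF p] .
  also have "\<dots> = \<bar>p b - p x\<bar> / p b * unperturbed_integrand c x"
    by (simp add: unperturbed_integrand_p)
  also have "\<dots> \<le> 6 * (x - b) / p b * (1 / (sqrt (1 - c) * sqrt (1 + b) * sqrt (c - x)))"
    using assms x p cubic_diff_le[of b c x] unperturbed_integrand_le[OF assms(1) x assms(3)]
    by (intro mult_mono divide_right_mono less_imp_le[OF unperturbed_integrand_pos]) (auto simp: p_def)
  finally show "\<bar>unperturbed_integrand c x - unperturbed_integrand c b\<bar>
      \<le> 6 / (p b * sqrt (1 - c) * sqrt (1 + b)) * (x - b) / sqrt (c - x)"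
    by simp
qed

lemma filterlim_snd_at_right_quadrant:
  "filterlim snd (at_right 0) (at (0::real, 0::real) within ({0<..} \<times> {0<..}))"
  unfolding filterlim_at
proof
  show "\<forall>\<^sub>F p in at (0::real, 0::real) within {0<..} \<times> {0<..}. snd p \<in> {0<..} \<and> snd p \<noteq> 0"
    unfolding eventually_at_filter by (rule always_eventually) auto
  show "(snd \<longlongrightarrow> 0) (at (0::real, 0::real) within ({0<..} \<times> {0<..}))"
    by (rule tendsto_eq_intros | simp)+
qed

lemma smallo_t_ln_quadrant_of_bigo:
  assumes "\<rho> \<in> O[at_right 0](\<lambda>t. t)"
  shows "(\<lambda>(s, t). complex_of_real (\<rho> t))
    \<in> o[at (0::real, 0::real) within ({0<..} \<times> {0<..})](\<lambda>(s, t). complex_of_real (t * ln (1 / t)))"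
proof -
  have "(\<lambda>t. t) \<in> o[at_right 0](\<lambda>t :: real. t * ln (1 / t))"
    by real_asymp
  then have "\<rho> \<in> o[at_right 0](\<lambda>t. t * ln (1 / t))"
    by (rule landau_o.big_small_trans[OF assms])
  from landau_o.small.compose[OF this filterlim_snd_at_right_quadrant]
  show ?thesis
    unfolding case_prod_unfold landau_o.small.of_real_iff by simp
qed

lemma bigo_fst_quadrant_of_bound:
  fixes \<sigma> :: "real \<Rightarrow> real \<Rightarrow> real"
  assumes "\<And>s t. 0 < s \<Longrightarrow> 0 < t \<Longrightarrow> t < 1 \<Longrightarrow> \<bar>\<sigma> s t\<bar> \<le> C * s"
  shows "(\<lambda>(s, t). complex_of_real (\<sigma> s t))
    \<in> O[at (0::real, 0::real) within ({0<..} \<times> {0<..})](\<lambda>(s, t). complex_of_real s)"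
proof (rule bigoI)
  have "\<forall>\<^sub>F p in at (0::real, 0::real) within {0<..} \<times> {0<..}. p \<in> {0<..} \<times> {0<..}"
    by (simp add: eventually_at_filter)
  moreover have "\<forall>\<^sub>F p in at (0::real, 0::real) within {0<..} \<times> {0<..}. snd p < (1 :: real)"
  proof -
    have "\<forall>\<^sub>F t in at_right 0. t < (1 :: real)"
      by (rule order_tendstoD(2)[OF tendsto_ident_at]) simp
    with filterlim_snd_at_right_quadrant show ?thesis
      by (rule filterlim_iff[THEN iffD1, rule_format])
  qed
  ultimately show "\<forall>\<^sub>F p in at (0::real, 0::real) within {0<..} \<times> {0<..}.
      norm (case p of (s, t) \<Rightarrow> complex_of_real (\<sigma> s t))
        \<le> C * norm (case p of (s, t) \<Rightarrow> complex_of_real s)"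
    by eventually_elim (auto intro: assms)
qed

lemma psqrt_of_nonneg: "0 \<le> y \<Longrightarrow> psqrt y = complex_of_real (sqrt y)"
  by (simp add: psqrt_def csqrt_of_real)

lemma psqrt_of_neg: "y < 0 \<Longrightarrow> psqrt y = \<i> * complex_of_real (sqrt (- y))"
  by (simp add: psqrt_def csqrt_of_real')

definition real_integrand :: "real \<Rightarrow> real \<Rightarrow> real \<Rightarrow> real \<Rightarrow> real \<Rightarrow> real \<Rightarrow> real" where
  "real_integrand a b c s t x =
     unperturbed_integrand c x * (1 + sqrt_shift_excess a s x) * (1 + sqrt_shift_excess b t x)"

definition shift_term :: "real \<Rightarrow> real \<Rightarrow> real \<Rightarrow> real \<Rightarrow> real \<Rightarrow> real \<Rightarrow> real" where
  "shift_term a b c s t x =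
     unperturbed_integrand c x * sqrt_shift_excess a s x * (1 + sqrt_shift_excess b t x)"

definition variation_term :: "real \<Rightarrow> real \<Rightarrow> real \<Rightarrow> real \<Rightarrow> real" where
  "variation_term b c t x =
     (unperturbed_integrand c x - unperturbed_integrand c b) * sqrt_shift_excess b t x"

lemma real_integrand_decomposition:
  "real_integrand a b c s t x = unperturbed_integrand c x + shift_term a b c s t x
     + unperturbed_integrand c b * sqrt_shift_excess b t x + variation_term b c t x"
  by (simp add: real_integrand_def shift_term_def variation_term_def algebra_simps)

context
  fixes a b c :: real
  assumes order: "-1 < a" "a < b" "b < c" "c < 1"
begin

lemma gst_eq_real_integrand:
  assumes "x \<in> {b<..<c}" "0 \<le> s" "0 \<le> t"
  shows "gst a b c s t x = - complex_of_real (real_integrand a b c s t x)"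
proof -
  have "gst a b c s t x = of_real (sqrt (x - a + s)) * of_real (sqrt (x - b + t)) /
      ((\<i> * of_real (sqrt (1 - x))) * of_real (sqrt (1 + x)) * of_real (sqrt (x - a))
        * of_real (sqrt (x - b)) * (\<i> * of_real (sqrt (c - x))))"
    unfolding gst_def using assms order by (simp add: psqrt_of_nonneg psqrt_of_neg add.commute)
  also have "\<dots> = - complex_of_real (real_integrand a b c s t x)"
    unfolding real_integrand_def unperturbed_integrand_def sqrt_shift_excess_def
    using assms order by (simp add: field_simps)
  finally show ?thesis .
qed

lemma Pst_eq_integral:
  assumes "0 \<le> s" "0 \<le> t" "real_integrand a b c s t integrable_on {b<..<c}"
  shows "Pst a b c s t = complex_of_real (integral {b<..<c} (real_integrand a b c s t))"
proof -
  have "integral {b..c} (gst a b c s t)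
      = integral {b<..<c} (\<lambda>x. - complex_of_real (real_integrand a b c s t x))"
    unfolding integral_open_interval_real using assms(1,2)
    by (intro integral_cong) (simp add: gst_eq_real_integrand)
  also have "\<dots> = - complex_of_real (integral {b<..<c} (real_integrand a b c s t))"
    by (intro integral_unique has_integral_neg has_integral_of_real integrable_integral assms(3))
  finally show ?thesis
    by (simp add: Pst_def)
qed

lemma unperturbed_integrand_le_weight:
  assumes "x \<in> {b<..<c}"
  shows "unperturbed_integrand c x
    \<le> 1 / (sqrt (1 - c) * sqrt (1 + b)) * (sqrt (c - b) * arcsine_weight b c x)"
proof -
  have "unperturbed_integrand c x \<le> 1 / (sqrt (1 - c) * sqrt (1 + b)) * (1 / sqrt (c - x))"
    using unperturbed_integrand_le[of b x c] assms order by simp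
  also have "\<dots> \<le> 1 / (sqrt (1 - c) * sqrt (1 + b)) * (sqrt (c - b) * arcsine_weight b c x)"
    using order assms by (intro mult_left_mono inverse_sqrt_le_arcsine_weight) auto
  finally show ?thesis .
qed

lemma integrable_unperturbed_integrand: "unperturbed_integrand c integrable_on {b<..<c}"
proof (rule continuous_dominated_integrable(1))
  show "continuous_on {b<..<c} (unperturbed_integrand c)"
    unfolding unperturbed_integrand_def using order by (intro continuous_intros) auto
  show "\<bar>unperturbed_integrand c x\<bar>
      \<le> sqrt (c - b) / (sqrt (1 - c) * sqrt (1 + b)) * arcsine_weight b c x"
    if "x \<in> {b<..<c}" for x
    using unperturbed_integrand_le_weight[OF that] unperturbed_integrand_pos[of x c] that order by simp
qed (use has_integral_arcsine_weight order in auto)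

lemma abs_shift_term_le:
  assumes "0 \<le> s" "0 \<le> t" "x \<in> {b<..<c}"
  shows "\<bar>shift_term a b c s t x\<bar>
    \<le> s * sqrt (c - b + t) / ((b - a) * sqrt (1 - c) * sqrt (1 + b)) * arcsine_weight b c x"
proof -
  have "sqrt_shift_excess a s x \<le> s / (x - a)"
    using assms order by (intro sqrt_shift_excess_le) auto
  also have "\<dots> \<le> s / (b - a)"
    using assms order by (intro divide_left_mono) auto
  finally have excess_a: "sqrt_shift_excess a s x \<le> s / (b - a)" .
  have "\<bar>shift_term a b c s t x\<bar>
      = unperturbed_integrand c x * sqrt_shift_excess a s x * (sqrt (x - b + t) / sqrt (x - b))"
    using assms order unperturbed_integrand_pos[of x c] sqrt_shift_excess_nonneg[of a x s]
    by (simp add: shift_term_def sqrt_shift_excess_def)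
  also have "\<dots> \<le> 1 / (sqrt (1 - c) * sqrt (1 + b) * sqrt (c - x)) * (s / (b - a))
      * (sqrt (c - b + t) / sqrt (x - b))"
    using assms order excess_a unperturbed_integrand_le[of b x c] sqrt_shift_excess_nonneg[of a x s]
    by (intro mult_mono divide_right_mono) auto
  also have "\<dots>
      = s * sqrt (c - b + t) / ((b - a) * sqrt (1 - c) * sqrt (1 + b)) * arcsine_weight b c x"
    using assms by (simp add: arcsine_weight_def real_sqrt_mult)
  finally show ?thesis .
qed

lemma continuous_on_shift_term: "0 \<le> s \<Longrightarrow> 0 \<le> t \<Longrightarrow> continuous_on {b<..<c} (shift_term a b c s t)"
  unfolding shift_term_def unperturbed_integrand_def sqrt_shift_excess_def using order
  by (intro continuous_intros) auto

lemma shift_term_integral: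
  assumes "0 \<le> s" "0 \<le> t"
  shows "shift_term a b c s t integrable_on {b<..<c}"
    and "\<bar>integral {b<..<c} (shift_term a b c s t)\<bar>
      \<le> s * sqrt (c - b + t) / ((b - a) * sqrt (1 - c) * sqrt (1 + b)) * pi"
  using continuous_dominated_integrable[OF _ continuous_on_shift_term[OF assms] has_integral_arcsine_weight
      abs_shift_term_le[OF assms]] order
  by simp_all

lemma variation_term_dominated:
  obtains M where "0 \<le> M"
    "\<And>t x. 0 \<le> t \<Longrightarrow> x \<in> {b<..<c} \<Longrightarrow> \<bar>variation_term b c t x\<bar> \<le> M * t * arcsine_weight b c x"
proof -
  obtain M where M: "0 \<le> M" "\<And>x. x \<in> {b<..<c} \<Longrightarrow>
      \<bar>unperturbed_integrand c x - unperturbed_integrand c b\<bar> \<le> M * (x - b) / sqrt (c - x)"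
    using unperturbed_integrand_diff_le[OF less_trans[OF order(1,2)] order(3,4)] by blast
  have "0 \<le> M * sqrt (c - b)"
    using M(1) order by simp
  moreover have "\<bar>variation_term b c t x\<bar> \<le> M * sqrt (c - b) * t * arcsine_weight b c x"
    if t: "0 \<le> t" and x: "x \<in> {b<..<c}" for t x
  proof -
    have "\<bar>variation_term b c t x\<bar> \<le> M * (x - b) / sqrt (c - x) * (t / (x - b))"
      unfolding variation_term_def abs_mult
      using M(2)[OF x] x t sqrt_shift_excess_nonneg[of b x t] sqrt_shift_excess_le[of b x t]
      by (intro mult_mono) auto
    also have "\<dots> = M * t * (1 / sqrt (c - x))"
      using x by simp
    also have "\<dots> \<le> M * t * (sqrt (c - b) * arcsine_weight b c x)"
      using x t M(1) by (intro mult_left_mono inverse_sqrt_le_arcsine_weight) auto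
    finally show ?thesis
      by (simp add: mult_ac)
  qed
  ultimately show thesis
    by (rule that)
qed

lemma continuous_on_variation_term: "0 \<le> t \<Longrightarrow> continuous_on {b<..<c} (variation_term b c t)"
  unfolding variation_term_def unperturbed_integrand_def sqrt_shift_excess_def using order
  by (intro continuous_intros) auto

lemma integrable_variation_term:
  assumes "0 \<le> t"
  shows "variation_term b c t integrable_on {b<..<c}"
proof -
  obtain M where "0 \<le> M"
    and M: "\<And>t x. 0 \<le> t \<Longrightarrow> x \<in> {b<..<c} \<Longrightarrow> \<bar>variation_term b c t x\<bar> \<le> M * t * arcsine_weight b c x"
    using variation_term_dominated by blast
  show ?thesis
    using continuous_dominated_integrable(1)[OF _ continuous_on_variation_term[OF assms]
        has_integral_arcsine_weight M[OF assms]] order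
    by simp
qed

lemma integral_variation_term_bigo:
  "(\<lambda>t. integral {b<..<c} (variation_term b c t)) \<in> O[at_right 0](\<lambda>t. t)"
proof -
  obtain M where M: "0 \<le> M"
    "\<And>t x. 0 \<le> t \<Longrightarrow> x \<in> {b<..<c} \<Longrightarrow> \<bar>variation_term b c t x\<bar> \<le> M * t * arcsine_weight b c x"
    using variation_term_dominated by blast
  have "\<bar>integral {b<..<c} (variation_term b c t)\<bar> \<le> M * pi * t" if "0 < t" for t
  proof -
    have "\<bar>integral {b<..<c} (variation_term b c t)\<bar> \<le> M * t * pi"
      using continuous_dominated_integrable(2)[OF _ continuous_on_variation_term[of t]
          has_integral_arcsine_weight M(2)[of t]] that order
      by simp
    then show ?thesis
      by (simp only: mult_ac)
  qed
  then show ?thesis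
    by (intro bigoI[where c = "M * pi"] eventually_mono[OF eventually_at_right_less]) simp
qed

lemma Pst_unperturbed: "Pst a b c 0 0 = complex_of_real (integral {b<..<c} (unperturbed_integrand c))"
proof -
  have unperturbed: "real_integrand a b c 0 0 x = unperturbed_integrand c x" if "x \<in> {b<..<c}" for x
    using that order by (simp add: real_integrand_def sqrt_shift_excess_zero)
  have "real_integrand a b c 0 0 integrable_on {b<..<c}"
    using integrable_cong[OF unperturbed] integrable_unperturbed_integrand by (rule iffD2)
  moreover have "integral {b<..<c} (real_integrand a b c 0 0)
      = integral {b<..<c} (unperturbed_integrand c)"
    using unperturbed by (rule integral_cong)
  ultimately show ?thesis
    using Pst_eq_integral[of 0 0] by simp
qed

lemma Pst_diff_eq:
  assumes "0 < s" "0 < t"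
  shows "Pst a b c s t - Pst a b c 0 0 = complex_of_real
    (unperturbed_integrand c b * integral {b<..<c} (sqrt_shift_excess b t)
     + integral {b<..<c} (variation_term b c t) + integral {b<..<c} (shift_term a b c s t))"
proof -
  have excess: "sqrt_shift_excess b t integrable_on {b<..<c}"
    using has_integral_sqrt_shift_excess[OF assms(2) order(3)] by blast
  have "((\<lambda>x. unperturbed_integrand c x + shift_term a b c s t x
      + unperturbed_integrand c b * sqrt_shift_excess b t x + variation_term b c t x)
    has_integral integral {b<..<c} (unperturbed_integrand c) + integral {b<..<c} (shift_term a b c s t)
      + unperturbed_integrand c b * integral {b<..<c} (sqrt_shift_excess b t)
      + integral {b<..<c} (variation_term b c t)) {b<..<c}"
    using integrable_unperturbed_integrand shift_term_integral(1) excess integrable_variation_term assms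
    by (intro has_integral_add has_integral_mult_right integrable_integral) auto
  then have "(real_integrand a b c s t has_integral integral {b<..<c} (unperturbed_integrand c)
      + integral {b<..<c} (shift_term a b c s t)
      + unperturbed_integrand c b * integral {b<..<c} (sqrt_shift_excess b t)
      + integral {b<..<c} (variation_term b c t)) {b<..<c}"
    by (simp only: real_integrand_decomposition[abs_def])
  then show ?thesis
    using Pst_eq_integral[of s t] Pst_unperturbed assms
    by (simp add: integral_unique has_integral_integrable)
qed

lemma Pst_diff_split:
  obtains \<rho> \<sigma> C where
    "\<And>s t. 0 < s \<Longrightarrow> 0 < t \<Longrightarrow> Pst a b c s t - Pst a b c 0 0 =
      complex_of_real (unperturbed_integrand c b / 2 * (t * ln (1 / t)))
      + complex_of_real (\<rho> t) + complex_of_real (\<sigma> s t)"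
    "\<rho> \<in> O[at_right 0](\<lambda>t. t)"
    "\<And>s t. 0 < s \<Longrightarrow> 0 < t \<Longrightarrow> t < 1 \<Longrightarrow> \<bar>\<sigma> s t\<bar> \<le> C * s"
proof -
  define \<rho> where "\<rho> t =
      unperturbed_integrand c b * (integral {b<..<c} (sqrt_shift_excess b t) - t / 2 * ln (1 / t))
      + integral {b<..<c} (variation_term b c t)" for t
  define \<sigma> where "\<sigma> s t = integral {b<..<c} (shift_term a b c s t)" for s t
  define D where "D = (b - a) * sqrt (1 - c) * sqrt (1 + b)"
  show thesis
  proof (rule that[of \<rho> \<sigma> "sqrt (c - b + 1) / D * pi"])
    show "Pst a b c s t - Pst a b c 0 0 =
      complex_of_real (unperturbed_integrand c b / 2 * (t * ln (1 / t)))
      + complex_of_real (\<rho> t) + complex_of_real (\<sigma> s t)" if "0 < s" "0 < t" for s t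
      using Pst_diff_eq[OF that] by (simp add: \<rho>_def \<sigma>_def algebra_simps)
    have "unperturbed_integrand c b \<noteq> 0"
      using order by (simp add: unperturbed_integrand_def)
    then show "\<rho> \<in> O[at_right 0](\<lambda>t. t)"
      unfolding \<rho>_def using integral_sqrt_shift_excess_asymp[OF order(3)] integral_variation_term_bigo
      by (intro sum_in_bigo) auto
    show "\<bar>\<sigma> s t\<bar> \<le> sqrt (c - b + 1) / D * pi * s" if "0 < s" "0 < t" "t < 1" for s t
    proof -
      have "\<bar>\<sigma> s t\<bar> \<le> s * sqrt (c - b + t) / D * pi"
        unfolding \<sigma>_def D_def using shift_term_integral(2) that by simp
      also have "\<dots> \<le> s * sqrt (c - b + 1) / D * pi"
        using that order by (intro mult_right_mono divide_right_mono mult_left_mono) (auto simp: D_def)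
      finally show ?thesis
        by (simp add: mult_ac)
    qed
  qed
qed

end

theorem proposition4p4:
  fixes \<xi>1 \<xi>2 \<xi>3 :: real
  assumes "-1 < \<xi>1" "\<xi>1 < \<xi>2" "\<xi>2 < \<xi>3" "\<xi>3 < 1"
  shows "\<exists>R1 R2 :: real \<times> real \<Rightarrow> complex.
    (\<forall>s t. 0 < s \<longrightarrow> 0 < t \<longrightarrow>
       Pst \<xi>1 \<xi>2 \<xi>3 s t - Pst \<xi>1 \<xi>2 \<xi>3 0 0 =
         complex_of_real (1 / (2 * sqrt (1 - \<xi>2) * sqrt (1 + \<xi>2) * sqrt (\<xi>3 - \<xi>2)) * (t * ln (1 / t)))
         + R1 (s, t) + R2 (s, t))
    \<and> R1 \<in> o[at (0, 0) within ({0<..} \<times> {0<..})](\<lambda>(s, t). complex_of_real (t * ln (1 / t)))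
    \<and> R2 \<in> O[at (0, 0) within ({0<..} \<times> {0<..})](\<lambda>(s, t). complex_of_real s)"
proof -
  obtain \<rho> \<sigma> C where split: "\<And>s t. 0 < s \<Longrightarrow> 0 < t \<Longrightarrow>
      Pst \<xi>1 \<xi>2 \<xi>3 s t - Pst \<xi>1 \<xi>2 \<xi>3 0 0 =
      complex_of_real (unperturbed_integrand \<xi>3 \<xi>2 / 2 * (t * ln (1 / t)))
      + complex_of_real (\<rho> t) + complex_of_real (\<sigma> s t)"
    and \<rho>: "\<rho> \<in> O[at_right 0](\<lambda>t. t)"
    and \<sigma>: "\<And>s t. 0 < s \<Longrightarrow> 0 < t \<Longrightarrow> t < 1 \<Longrightarrow> \<bar>\<sigma> s t\<bar> \<le> C * s"
    using Pst_diff_split[OF assms] by blast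
  have coefficient:
    "unperturbed_integrand \<xi>3 \<xi>2 / 2 = 1 / (2 * sqrt (1 - \<xi>2) * sqrt (1 + \<xi>2) * sqrt (\<xi>3 - \<xi>2))"
    by (simp add: unperturbed_integrand_def)
  have "\<forall>s t. 0 < s \<longrightarrow> 0 < t \<longrightarrow> Pst \<xi>1 \<xi>2 \<xi>3 s t - Pst \<xi>1 \<xi>2 \<xi>3 0 0 =
      complex_of_real (1 / (2 * sqrt (1 - \<xi>2) * sqrt (1 + \<xi>2) * sqrt (\<xi>3 - \<xi>2)) * (t * ln (1 / t)))
      + (\<lambda>(s, t). complex_of_real (\<rho> t)) (s, t) + (\<lambda>(s, t). complex_of_real (\<sigma> s t)) (s, t)"
    using split by (simp add: coefficient)
  with smallo_t_ln_quadrant_of_bigo[OF \<rho>] bigo_fst_quadrant_of_bound[OF \<sigma>] show ?thesis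
    by (intro exI[of _ "\<lambda>(s, t). complex_of_real (\<rho> t)"]
        exI[of _ "\<lambda>(s, t). complex_of_real (\<sigma> s t)"] conjI)
qed

end
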